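(* For every $n\geq 1$, $$\sum_{T\in \mathcal P_n}t^{\mathrm{eld}(T)}\prod_{i=1}^{n}x_i^{\mathrm{young}_T(i)}=\prod_{k=0}^{n-2}(x_1+\cdots+x_n+kt).$$
   Context: All trees are rooted trees whose vertices are labeled by distinct positive integers. A vertex $j$ is a descendant of $i$ if the path from the root to $j$ passes through $i$ (every vertex is a descendant of itself); $\beta_T(i)$ is the smallest descendant of $i$. A child of $i$ is a descendant joined to $i$ by an edge; children of the same vertex are brothers. A plane tree is a rooted tree in which the children of each vertex are linearly ordered (left to right). In a plane tree $T$, a vertex $j$ is elder if it has a brother $k$ to its right with $\beta_T(k)<\beta_T(j)$. $\mathrm{eld}_T(v)$ is the number of elder children of $v$, $\mathrm{eld}(T)$ the total number of elder vertices, $\deg_T(v)$ the number of children of $v$, and $\mathrm{young}_T(v)=\deg_T(v)-\mathrm{eld}_T(v)$. $\mathcal P_n$ is the set of all plane trees on vertex set $[n]=\{1,\dots,n\}$ (any root). The empty product equals $1$. *)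

theory Defs
  imports Main
begin

text \<open>A plane tree on vertex set {1..n} is encoded by its root r and a function ch
  giving, for each vertex, the left-to-right list of its children
  (ch v = [] for v outside {1..n}).\<close>

definition edges :: "(nat \<Rightarrow> nat list) \<Rightarrow> (nat \<times> nat) set" where
  "edges ch = {(v, c). c \<in> set (ch v)}"

definition is_plane_tree :: "nat \<Rightarrow> nat \<Rightarrow> (nat \<Rightarrow> nat list) \<Rightarrow> bool" where
  "is_plane_tree n r ch \<longleftrightarrow>
     r \<in> {1..n} \<and>
     (\<forall>v. v \<notin> {1..n} \<longrightarrow> ch v = []) \<and>
     (\<forall>v. distinct (ch v) \<and> set (ch v) \<subseteq> {1..n}) \<and>
     (\<forall>v. r \<notin> set (ch v)) \<and>
     (\<forall>c \<in> {1..n} - {r}. \<exists>!v. c \<in> set (ch v)) \<and>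
     (\<forall>j \<in> {1..n}. (r, j) \<in> (edges ch)\<^sup>*)"

definition plane_trees :: "nat \<Rightarrow> (nat \<times> (nat \<Rightarrow> nat list)) set" where
  "plane_trees n = {(r, ch). is_plane_tree n r ch}"

definition beta :: "(nat \<Rightarrow> nat list) \<Rightarrow> nat \<Rightarrow> nat" where
  "beta ch i = Min {j. (i, j) \<in> (edges ch)\<^sup>*}"

definition eld_v :: "(nat \<Rightarrow> nat list) \<Rightarrow> nat \<Rightarrow> nat" where
  "eld_v ch v = card {p. p < length (ch v) \<and>
      (\<exists>q. p < q \<and> q < length (ch v) \<and> beta ch (ch v ! q) < beta ch (ch v ! p))}"

definition deg_v :: "(nat \<Rightarrow> nat list) \<Rightarrow> nat \<Rightarrow> nat" where
  "deg_v ch v = length (ch v)"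

definition young_v :: "(nat \<Rightarrow> nat list) \<Rightarrow> nat \<Rightarrow> nat" where
  "young_v ch v = deg_v ch v - eld_v ch v"

definition eld :: "nat \<Rightarrow> (nat \<Rightarrow> nat list) \<Rightarrow> nat" where
  "eld n ch = (\<Sum>v\<in>{1..n}. eld_v ch v)"

end

theory Submission
  imports Defs
begin

text \<open>
  Group the trees by their outdegree function d. For fixed d with \<Sum>v. d v = n - 1, the weighted
  number of plane trees with outdegrees d is the number of words of length n - 1 containing each
  letter v exactly d v times, multiplied by \<Prod>v. x v (x v + t) \<dots> (x v + (d v - 1) t).
  This is proved by induction, deleting the largest leaf l: every subtree avoiding l contains a
  smaller leaf, so \<beta>(l) = l exceeds the \<beta> of each brother of l, and deleting l changes no
  comparison of \<beta>-values between the remaining brothers. Hence l is elder unless it is the last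
  child of its parent p, and the d p possible positions of l contribute
  t + \<dots> + t + x p = x p + (d p - 1) t.
  Summing over words, the i-th letter v of a word contributes x v + k t, where k counts the
  earlier occurrences of v; summed over v this is x 1 + \<dots> + x n + (i - 1) t.
\<close>

definition plane_tree_on :: "nat set \<Rightarrow> nat \<Rightarrow> (nat \<Rightarrow> nat list) \<Rightarrow> bool" where
  "plane_tree_on S r ch \<longleftrightarrow>
     r \<in> S \<and>
     (\<forall>v. v \<notin> S \<longrightarrow> ch v = []) \<and>
     (\<forall>v. distinct (ch v) \<and> set (ch v) \<subseteq> S) \<and>
     (\<forall>v. r \<notin> set (ch v)) \<and>
     (\<forall>c \<in> S - {r}. \<exists>!v. c \<in> set (ch v)) \<and>
     (\<forall>j \<in> S. (r, j) \<in> (edges ch)\<^sup>*)"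

lemma is_plane_tree_iff_plane_tree_on: "is_plane_tree n r ch \<longleftrightarrow> plane_tree_on {1..n} r ch"
  unfolding is_plane_tree_def plane_tree_on_def by simp

lemma mem_edges_iff [simp]: "(v, c) \<in> edges ch \<longleftrightarrow> c \<in> set (ch v)"
  by (simp add: edges_def)

definition descendants :: "(nat \<Rightarrow> nat list) \<Rightarrow> nat \<Rightarrow> nat set" where
  "descendants ch a = {j. (a, j) \<in> (edges ch)\<^sup>*}"

lemma self_mem_descendants [simp]: "a \<in> descendants ch a"
  by (simp add: descendants_def)

lemma beta_eq_Min_descendants: "beta ch a = Min (descendants ch a)"
  by (simp add: beta_def descendants_def)

context
  fixes S r ch
  assumes tree: "plane_tree_on S r ch"
begin

lemma plane_tree_on_childD:
  assumes "c \<in> set (ch v)"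
  shows "c \<in> S" "v \<in> S" "c \<noteq> r"
  using tree assms unfolding plane_tree_on_def by auto

lemma descendants_subset: "descendants ch a \<subseteq> insert a S"
proof
  fix j assume "j \<in> descendants ch a"
  then have "(a, j) \<in> (edges ch)\<^sup>*" by (simp add: descendants_def)
  then show "j \<in> insert a S"
    by (induction rule: rtrancl_induct) (auto dest: plane_tree_on_childD)
qed

lemma finite_descendants: "finite S \<Longrightarrow> finite (descendants ch a)"
  using descendants_subset by (rule finite_subset) simp

lemma beta_le: "finite S \<Longrightarrow> j \<in> descendants ch a \<Longrightarrow> beta ch a \<le> j"
  by (simp add: beta_eq_Min_descendants finite_descendants)

lemma beta_mem_descendants: "finite S \<Longrightarrow> beta ch a \<in> descendants ch a"
  by (metis Min_in beta_eq_Min_descendants empty_iff finite_descendants self_mem_descendants)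

lemma parent_unique:
  assumes "c \<in> set (ch v)" "c \<in> set (ch w)"
  shows "v = w"
proof -
  have "c \<in> S - {r}" using plane_tree_on_childD assms(1) by blast
  then show ?thesis using tree assms unfolding plane_tree_on_def by metis
qed

lemma edges_trancl_irrefl: "(v, v) \<notin> (edges ch)\<^sup>+"
proof
  assume cyc: "(v, v) \<in> (edges ch)\<^sup>+"
  then obtain z where "z \<in> set (ch v)" using tranclD by fastforce
  then have "v \<in> S" by (rule plane_tree_on_childD)
  then have "(r, v) \<in> (edges ch)\<^sup>*" using tree unfolding plane_tree_on_def by blast
  then show False using cyc
  proof (induction rule: rtrancl_induct)
    case base
    then obtain z where "r \<in> set (ch z)" using tranclD2 by fastforce
    then show False using tree unfolding plane_tree_on_def by blast
  next
    case (step y j)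
    then obtain z where z: "(j, z) \<in> (edges ch)\<^sup>*" "j \<in> set (ch z)"
      using tranclD2 by fastforce
    have "z = y" using parent_unique z(2) step(2) by simp
    then have "(y, y) \<in> (edges ch)\<^sup>+" using step(2) z(1) by (meson rtrancl_into_trancl2)
    then show False using step(3) by blast
  qed
qed

lemma descendants_comparable:
  assumes "j \<in> descendants ch a" "j \<in> descendants ch c"
  shows "a \<in> descendants ch c \<or> c \<in> descendants ch a"
proof -
  have "(a, j) \<in> (edges ch)\<^sup>*" "(c, j) \<in> (edges ch)\<^sup>*"
    using assms by (auto simp: descendants_def)
  then have "(a, c) \<in> (edges ch)\<^sup>* \<or> (c, a) \<in> (edges ch)\<^sup>*"
  proof (induction arbitrary: c rule: rtrancl_induct)
    case (step y j)
    show ?case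
    proof (cases "c = j")
      case True
      then show ?thesis using step(1,2) by (meson mem_edges_iff rtrancl.rtrancl_into_rtrancl)
    next
      case False
      then obtain z where z: "(c, z) \<in> (edges ch)\<^sup>*" "j \<in> set (ch z)"
        using step(4) by (metis mem_edges_iff rtranclE)
      have "z = y" using parent_unique z(2) step(2) by simp
      then show ?thesis using step(3) z(1) by blast
    qed
  qed blast
  then show ?thesis by (auto simp: descendants_def)
qed

lemma siblings_descendants_disjoint:
  assumes "a \<in> set (ch v)" "c \<in> set (ch v)" "a \<noteq> c"
  shows "descendants ch a \<inter> descendants ch c = {}"
proof -
  have no_sibling_below: False
    if sib: "a' \<in> set (ch v)" "c' \<in> set (ch v)" "a' \<noteq> c'" "c' \<in> descendants ch a'" for a' c'
  proof -
    obtain z where z: "(a', z) \<in> (edges ch)\<^sup>*" "c' \<in> set (ch z)"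
      using sib(3,4) by (metis descendants_def mem_Collect_eq mem_edges_iff rtranclE)
    have "z = v" using parent_unique z(2) sib(2) by simp
    then have "(v, v) \<in> (edges ch)\<^sup>+" using sib(1) z(1) by (meson mem_edges_iff rtrancl_into_trancl2)
    then show False using edges_trancl_irrefl by blast
  qed
  show ?thesis
  proof (rule ccontr)
    assume "descendants ch a \<inter> descendants ch c \<noteq> {}"
    then obtain j where "j \<in> descendants ch a" "j \<in> descendants ch c" by blast
    then have "a \<in> descendants ch c \<or> c \<in> descendants ch a" by (rule descendants_comparable)
    then show False
      using no_sibling_below[OF assms] no_sibling_below[OF assms(2,1) assms(3)[symmetric]] by blast
  qed
qed

lemma plane_tree_on_root_has_child:
  assumes "finite S" "2 \<le> card S"
  shows "ch r \<noteq> []"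
proof -
  have "S - {r} \<noteq> {}"
  proof
    assume "S - {r} = {}"
    then have "card S \<le> card {r}" by (intro card_mono) auto
    then show False using assms(2) by simp
  qed
  then obtain j where "j \<in> S" "j \<noteq> r" by blast
  then have "(r, j) \<in> (edges ch)\<^sup>+"
    using tree unfolding plane_tree_on_def by (auto simp: rtrancl_eq_or_trancl)
  then show ?thesis using tranclD by fastforce
qed

lemma exists_leaf_descendant:
  assumes "finite S"
  shows "\<exists>l \<in> descendants ch a. ch l = []"
proof (induction "card (descendants ch a)" arbitrary: a rule: less_induct)
  case less
  show ?case
  proof (cases "ch a = []")
    case False
    then obtain c where c: "c \<in> set (ch a)" by (cases "ch a") auto
    have "descendants ch c \<subseteq> descendants ch a"
      using c by (auto simp: descendants_def intro: converse_rtrancl_into_rtrancl)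
    moreover have "a \<notin> descendants ch c"
    proof
      assume "a \<in> descendants ch c"
      then have "(a, a) \<in> (edges ch)\<^sup>+"
        using c by (simp add: descendants_def rtrancl_into_trancl2)
      then show False using edges_trancl_irrefl by blast
    qed
    ultimately have "descendants ch c \<subset> descendants ch a" by auto
    then have "card (descendants ch c) < card (descendants ch a)"
      by (rule psubset_card_mono[OF finite_descendants[OF assms]])
    then obtain l where l: "l \<in> descendants ch c" "ch l = []" using less by blast
    then have "l \<in> descendants ch a"
      using c by (auto simp: descendants_def intro: converse_rtrancl_into_rtrancl)
    then show ?thesis using l(2) by blast
  qed auto
qed

end

definition remove_leaf :: "nat \<Rightarrow> (nat \<Rightarrow> nat list) \<Rightarrow> nat \<Rightarrow> nat list" where
  "remove_leaf l ch v = filter (\<lambda>y. y \<noteq> l) (ch v)"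

definition insert_child ::
    "nat \<Rightarrow> nat \<Rightarrow> nat \<Rightarrow> (nat \<Rightarrow> nat list) \<Rightarrow> nat \<Rightarrow> nat list" where
  "insert_child p i l ch = ch(p := take i (ch p) @ l # drop i (ch p))"

lemma remove_leaf_eq_self: "l \<notin> set (ch v) \<Longrightarrow> remove_leaf l ch v = ch v"
  by (auto simp: remove_leaf_def filter_id_conv)

lemma descendants_remove_leaf:
  assumes "ch l = []" "a \<noteq> l"
  shows "descendants (remove_leaf l ch) a = descendants ch a - {l}"
proof (intro set_eqI iffI)
  fix j assume "j \<in> descendants (remove_leaf l ch) a"
  then have "(a, j) \<in> (edges (remove_leaf l ch))\<^sup>*" by (simp add: descendants_def)
  then have "(a, j) \<in> (edges ch)\<^sup>* \<and> j \<noteq> l"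
    by (induction rule: rtrancl_induct) (auto simp: remove_leaf_def assms(2) intro: rtrancl_into_rtrancl)
  then show "j \<in> descendants ch a - {l}" by (simp add: descendants_def)
next
  fix j assume "j \<in> descendants ch a - {l}"
  then have "(a, j) \<in> (edges ch)\<^sup>*" "j \<noteq> l" by (auto simp: descendants_def)
  then have "(a, j) \<in> (edges (remove_leaf l ch))\<^sup>*"
  proof (induction rule: rtrancl_induct)
    case (step y z)
    have "y \<noteq> l" using step(2) assms(1) by auto
    then show ?case using step by (auto simp: remove_leaf_def intro: rtrancl_into_rtrancl)
  qed simp
  then show "j \<in> descendants (remove_leaf l ch) a" by (simp add: descendants_def)
qed

lemma plane_tree_on_remove_leaf:
  assumes tree: "plane_tree_on S r ch" and "ch l = []" "l \<noteq> r"
  shows "plane_tree_on (S - {l}) r (remove_leaf l ch)"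
proof -
  have "descendants (remove_leaf l ch) r = descendants ch r - {l}"
    using descendants_remove_leaf[of ch l r] assms(2,3) by simp
  then have "j \<in> descendants (remove_leaf l ch) r" if "j \<in> S - {l}" for j
    using that tree unfolding plane_tree_on_def descendants_def by auto
  then show ?thesis using tree assms(2,3)
    unfolding plane_tree_on_def remove_leaf_def descendants_def by auto
qed

lemma set_insert_child:
  "set (insert_child p i l ch v) = (if v = p then insert l (set (ch p)) else set (ch v))"
proof -
  have "set (take i (ch p)) \<union> set (drop i (ch p)) = set (ch p)"
    by (metis append_take_drop_id set_append)
  then show ?thesis by (auto simp: insert_child_def)
qed

lemma edges_insert_child: "edges (insert_child p i l ch) = insert (p, l) (edges ch)"
  by (auto simp: edges_def set_insert_child split: if_splits)

lemma length_insert_child: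
  "i \<le> length (ch p) \<Longrightarrow> length (insert_child p i l ch v) = length (ch v) + (if v = p then 1 else 0)"
  by (simp add: insert_child_def)

lemma distinct_insert_child:
  assumes "distinct (ch v)" "l \<notin> set (ch p)"
  shows "distinct (insert_child p i l ch v)"
proof (cases "v = p")
  case True
  have "distinct (take i (ch p) @ drop i (ch p))" using assms True by simp
  moreover have "l \<notin> set (take i (ch p) @ drop i (ch p))" using assms(2) by simp
  ultimately show ?thesis using True by (auto simp: insert_child_def simp del: append_take_drop_id)
qed (use assms in \<open>simp add: insert_child_def\<close>)

lemma plane_tree_on_insert_child:
  assumes tree: "plane_tree_on (S - {l}) r ch" and "l \<in> S" "p \<in> S - {l}"
  shows "plane_tree_on S r (insert_child p i l ch)"
proof -
  have no_l: "l \<notin> set (ch v)" for v using tree unfolding plane_tree_on_def by auto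
  have mono: "(edges ch)\<^sup>* \<subseteq> (edges (insert_child p i l ch))\<^sup>*"
    by (rule rtrancl_mono) (auto simp: edges_insert_child)
  have reach: "(r, j) \<in> (edges ch)\<^sup>*" if "j \<in> S - {l}" for j
    using tree that unfolding plane_tree_on_def by blast
  have "(r, j) \<in> (edges (insert_child p i l ch))\<^sup>*" if "j \<in> S" for j
  proof (cases "j = l")
    case True
    have "(r, p) \<in> (edges (insert_child p i l ch))\<^sup>*" using reach assms(3) mono by blast
    then show ?thesis using True by (auto simp: edges_insert_child intro: rtrancl_into_rtrancl)
  qed (use reach that mono in blast)
  moreover have "\<exists>!v. c \<in> set (insert_child p i l ch v)" if "c \<in> S - {r}" for c
  proof (cases "c = l")
    case True
    then show ?thesis using no_l by (auto simp: set_insert_child)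
  next
    case False
    then have "\<exists>!v. c \<in> set (ch v)" using tree that unfolding plane_tree_on_def by blast
    moreover have "c \<in> set (insert_child p i l ch v) \<longleftrightarrow> c \<in> set (ch v)" for v
      using False by (simp add: set_insert_child)
    ultimately show ?thesis by simp
  qed
  moreover have "insert_child p i l ch v = []" if "v \<notin> S" for v
    using tree that assms(3) unfolding plane_tree_on_def insert_child_def by auto
  ultimately show ?thesis
    using tree assms(2,3) no_l distinct_insert_child
    unfolding plane_tree_on_def by (auto simp: set_insert_child)
qed

lemma remove_leaf_insert_child:
  assumes "\<And>v. l \<notin> set (ch v)"
  shows "remove_leaf l (insert_child p i l ch) = ch"
proof
  fix v
  have "l \<notin> set (take i (ch p))" "l \<notin> set (drop i (ch p))"
    using assms[of p] by (auto dest: in_set_takeD in_set_dropD)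
  then show "remove_leaf l (insert_child p i l ch) v = ch v"
    using assms remove_leaf_eq_self
    by (cases "v = p") (auto simp: remove_leaf_def insert_child_def filter_id_conv)
qed

lemma remove_leaf_parent:
  assumes "ch p = as @ l # bs" "distinct (ch p)"
  shows "remove_leaf l ch p = as @ bs"
proof -
  have "filter (\<lambda>y. y \<noteq> l) as = as" "filter (\<lambda>y. y \<noteq> l) bs = bs"
    using assms by (auto simp: filter_id_conv)
  then show ?thesis using assms(1) by (simp add: remove_leaf_def)
qed

lemma insert_child_remove_leaf:
  assumes "ch p = as @ l # bs" "distinct (ch p)" "\<And>v. v \<noteq> p \<Longrightarrow> l \<notin> set (ch v)"
  shows "insert_child p (length as) l (remove_leaf l ch) = ch"
proof
  fix v
  show "insert_child p (length as) l (remove_leaf l ch) v = ch v"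
    using assms remove_leaf_parent[of ch p, OF assms(1,2)] remove_leaf_eq_self
    by (cases "v = p") (auto simp: insert_child_def)
qed

lemma insert_child_inj:
  assumes "\<And>v. l \<notin> set (c1 v)" "\<And>v. l \<notin> set (c2 v)"
    and "i1 \<le> length (c1 p1)" "i2 \<le> length (c2 p2)"
    and eq: "insert_child p1 i1 l c1 = insert_child p2 i2 l c2"
  shows "p1 = p2 \<and> i1 = i2 \<and> c1 = c2"
proof -
  have "l \<in> set (insert_child p2 i2 l c2 p1)"
    using eq set_insert_child[of p1 i1 l c1 p1] by simp
  then have p: "p1 = p2" using assms(2) by (simp add: set_insert_child split: if_splits)
  have "take i1 (c1 p1) @ l # drop i1 (c1 p1) = take i2 (c2 p1) @ l # drop i2 (c2 p1)"
    using fun_cong[OF eq, of p1] p by (simp add: insert_child_def)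
  moreover have "l \<notin> set (take i1 (c1 p1))" "l \<notin> set (drop i1 (c1 p1))"
    using assms(1)[of p1] by (auto dest: in_set_takeD in_set_dropD)
  ultimately have split_eq: "take i1 (c1 p1) = take i2 (c2 p1)" "drop i1 (c1 p1) = drop i2 (c2 p1)"
    using append_Cons_eq_iff[of l "take i1 (c1 p1)" "drop i1 (c1 p1)"] by simp_all
  then have "c1 p1 = c2 p1" by (metis append_take_drop_id)
  moreover have "i1 = i2"
    using split_eq(1) assms(3,4) p by (metis length_take min.absorb2)
  moreover have "c1 v = c2 v" if "v \<noteq> p1" for v
    using fun_cong[OF eq, of v] that p by (simp add: insert_child_def)
  ultimately show ?thesis using p by (metis ext)
qed

fun elder_count :: "(nat \<Rightarrow> nat) \<Rightarrow> nat list \<Rightarrow> nat" where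
  "elder_count f [] = 0"
| "elder_count f (a # xs) = (if \<exists>b\<in>set xs. f b < f a then 1 else 0) + elder_count f xs"

lemma card_elder_positions:
  "card {p. p < length xs \<and> (\<exists>q. p < q \<and> q < length xs \<and> f (xs ! q) < f (xs ! p))}
     = elder_count f xs"
proof (induction xs)
  case (Cons a xs)
  let ?E = "\<lambda>xs. {p. p < length xs \<and> (\<exists>q. p < q \<and> q < length xs \<and> f (xs ! q) < f (xs ! p))}"
  let ?head = "if \<exists>b\<in>set xs. f b < f a then {0::nat} else {}"
  have "?E (a # xs) = ?head \<union> Suc ` ?E xs"
  proof (intro set_eqI iffI)
    fix p assume "p \<in> ?E (a # xs)"
    then obtain q where q: "p < q" "q < Suc (length xs)" "f ((a # xs) ! q) < f ((a # xs) ! p)"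
      by auto
    then obtain q' where "q = Suc q'" by (cases q) auto
    then show "p \<in> ?head \<union> Suc ` ?E xs"
      using q by (cases p) (auto simp: image_iff)
  next
    fix p assume "p \<in> ?head \<union> Suc ` ?E xs"
    then show "p \<in> ?E (a # xs)"
    proof
      assume "p \<in> ?head"
      then obtain q where "p = 0" "q < length xs" "f (xs ! q) < f a"
        by (auto simp: in_set_conv_nth split: if_splits)
      then show ?thesis by (auto intro!: exI[of _ "Suc q"])
    next
      assume "p \<in> Suc ` ?E xs"
      then show ?thesis by (force intro!: exI[of _ "Suc _"])
    qed
  qed
  then have "card (?E (a # xs)) = card ?head + card (?E xs)"
    by (simp add: card_Un_disjoint card_image)
  then show ?case using Cons by simp
qed simp

lemma elder_count_le_length: "elder_count f xs \<le> length xs"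
  by (induction xs) auto

lemma elder_count_cong:
  "(\<And>a b. a \<in> set xs \<Longrightarrow> b \<in> set xs \<Longrightarrow> f a < f b \<longleftrightarrow> g a < g b) \<Longrightarrow>
    elder_count f xs = elder_count g xs"
  by (induction xs) auto

lemma elder_count_insert_max:
  "(\<And>b. b \<in> set as \<union> set bs \<Longrightarrow> f b < f l) \<Longrightarrow>
    elder_count f (as @ l # bs) = elder_count f (as @ bs) + (if bs = [] then 0 else 1)"
proof (induction as)
  case Nil
  then show ?case by (cases bs) auto
next
  case (Cons a as)
  have "f a < f l" using Cons.prems by simp
  then have "(\<exists>b\<in>set (as @ l # bs). f b < f a) \<longleftrightarrow> (\<exists>b\<in>set (as @ bs). f b < f a)"
    by auto
  then show ?case using Cons by simp
qed

lemma eld_v_eq_elder_count: "eld_v ch v = elder_count (beta ch) (ch v)"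
  unfolding eld_v_def by (rule card_elder_positions)

lemma Min_Diff_singleton_cases:
  assumes "finite D" "a \<in> D" "a \<noteq> l"
  shows "Min D \<noteq> l \<and> Min (D - {l}) = Min D \<or> Min D = l \<and> l < Min (D - {l})"
proof -
  have Min': "Min (D - {l}) \<in> D - {l}" using assms by (intro Min_in) auto
  have le: "Min D \<le> Min (D - {l})" using assms by (intro Min_antimono) auto
  show ?thesis
  proof (cases "Min D = l")
    case False
    then have "Min D \<in> D - {l}" using assms by (auto intro: Min_in)
    then have "Min (D - {l}) \<le> Min D" using assms(1) by simp
    then show ?thesis using False le by simp
  qed (use Min' le in auto)
qed

definition tree_weight ::
    "(nat \<Rightarrow> 'a::comm_semiring_1) \<Rightarrow> 'a \<Rightarrow> nat set \<Rightarrow> (nat \<Rightarrow> nat list) \<Rightarrow> 'a" where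
  "tree_weight x t S ch = (\<Prod>v\<in>S. t ^ eld_v ch v * x v ^ young_v ch v)"

locale max_leaf =
  fixes S r ch l
  assumes tree: "plane_tree_on S r ch" and finite: "finite S"
    and leaf_mem: "l \<in> S" and leaf_ne_root: "l \<noteq> r" and leaf: "ch l = []"
    and leaf_max: "\<And>v. v \<in> S \<Longrightarrow> ch v = [] \<Longrightarrow> v \<le> l"
begin

lemma beta_max_leaf: "beta ch l = l"
proof -
  have "(l, j) \<in> (edges ch)\<^sup>* \<Longrightarrow> j = l" for j
    by (erule converse_rtranclE) (use leaf in auto)
  then have "descendants ch l = {l}" by (auto simp: descendants_def)
  then show ?thesis by (simp add: beta_eq_Min_descendants)
qed

lemma beta_less_max_leaf:
  assumes "a \<in> S" "l \<notin> descendants ch a"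
  shows "beta ch a < l"
proof -
  obtain l' where l': "l' \<in> descendants ch a" "ch l' = []"
    using exists_leaf_descendant[OF tree finite] by blast
  then have "l' \<in> S" using descendants_subset[OF tree] assms(1) by blast
  then have "l' \<le> l" using leaf_max l'(2) by blast
  moreover have "l' \<noteq> l" using l'(1) assms(2) by blast
  ultimately have "l' < l" by simp
  then show ?thesis using beta_le[OF tree finite l'(1)] by simp
qed

lemma beta_remove_leaf_cases:
  assumes "a \<in> S" "a \<noteq> l"
  shows "beta ch a < l \<and> beta (remove_leaf l ch) a = beta ch a
    \<or> beta ch a = l \<and> l < beta (remove_leaf l ch) a"
proof -
  define D where "D = descendants ch a"
  have beta: "beta ch a = Min D" by (simp add: D_def beta_eq_Min_descendants)
  have beta': "beta (remove_leaf l ch) a = Min (D - {l})"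
    unfolding D_def beta_eq_Min_descendants descendants_remove_leaf[of ch l a, OF leaf assms(2)] ..
  show ?thesis
  proof (cases "l \<in> D")
    case True
    then have "Min D \<le> l" using beta beta_le[OF tree finite, of l a] by (simp add: D_def)
    then show ?thesis
      using Min_Diff_singleton_cases[of D a l] finite_descendants[OF tree finite] assms(2)
      by (auto simp: beta beta' D_def)
  next
    case False
    then show ?thesis using beta_less_max_leaf[OF assms(1)] beta beta' by (simp add: D_def)
  qed
qed

lemma beta_remove_leaf_less_iff:
  assumes "a \<in> set (ch v)" "c \<in> set (ch v)" "a \<noteq> l" "c \<noteq> l"
  shows "beta (remove_leaf l ch) a < beta (remove_leaf l ch) c \<longleftrightarrow> beta ch a < beta ch c"
proof (cases "a = c")
  case False
  have "beta ch a \<in> descendants ch a" "beta ch c \<in> descendants ch c"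
    by (rule beta_mem_descendants[OF tree finite])+
  then have "beta ch a \<noteq> beta ch c"
    using siblings_descendants_disjoint[OF tree assms(1,2) False] by (metis disjoint_iff)
  moreover have "a \<in> S" "c \<in> S" using plane_tree_on_childD[OF tree] assms(1,2) by auto
  ultimately show ?thesis
    using beta_remove_leaf_cases[of a] beta_remove_leaf_cases[of c] assms(3,4) by linarith
qed simp

lemma beta_sibling_less_max_leaf:
  assumes "a \<in> set (ch v)" "l \<in> set (ch v)" "a \<noteq> l"
  shows "beta ch a < l"
proof -
  have "l \<notin> descendants ch a"
    using siblings_descendants_disjoint[OF tree assms] by auto
  moreover have "a \<in> S" using plane_tree_on_childD[OF tree assms(1)] by simp
  ultimately show ?thesis by (rule beta_less_max_leaf[rotated])
qed

lemma eld_young_remove_leaf_nonparent: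
  assumes "l \<notin> set (ch v)"
  shows "eld_v (remove_leaf l ch) v = eld_v ch v" "young_v (remove_leaf l ch) v = young_v ch v"
proof -
  show eld: "eld_v (remove_leaf l ch) v = eld_v ch v"
    unfolding eld_v_eq_elder_count remove_leaf_eq_self[of l ch v, OF assms]
    by (rule elder_count_cong) (use beta_remove_leaf_less_iff assms in blast)
  show "young_v (remove_leaf l ch) v = young_v ch v"
    using eld remove_leaf_eq_self[of l ch v, OF assms] by (simp add: young_v_def deg_v_def)
qed

lemma eld_young_remove_leaf_parent:
  assumes chp: "ch p = as @ l # bs"
  shows "eld_v ch p = eld_v (remove_leaf l ch) p + (if bs = [] then 0 else 1)"
    and "young_v ch p = young_v (remove_leaf l ch) p + (if bs = [] then 1 else 0)"
proof -
  have "distinct (ch p)" using tree by (simp add: plane_tree_on_def)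
  then have rl: "remove_leaf l ch p = as @ bs" and l_notin: "l \<notin> set as" "l \<notin> set bs"
    using remove_leaf_parent[of ch p, OF chp] chp by auto
  have "elder_count (beta ch) (as @ l # bs) = elder_count (beta ch) (as @ bs) + (if bs = [] then 0 else 1)"
    by (rule elder_count_insert_max)
      (use beta_sibling_less_max_leaf[of _ p] beta_max_leaf chp l_notin in auto)
  moreover have "elder_count (beta ch) (as @ bs) = elder_count (beta (remove_leaf l ch)) (as @ bs)"
    by (rule elder_count_cong) (use beta_remove_leaf_less_iff[of _ p] chp l_notin in auto)
  ultimately show eld: "eld_v ch p = eld_v (remove_leaf l ch) p + (if bs = [] then 0 else 1)"
    by (simp add: eld_v_eq_elder_count chp rl)
  have "eld_v (remove_leaf l ch) p \<le> length (as @ bs)"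
    using elder_count_le_length[of _ "as @ bs"] by (simp add: eld_v_eq_elder_count rl)
  then show "young_v ch p = young_v (remove_leaf l ch) p + (if bs = [] then 1 else 0)"
    using eld by (simp add: young_v_def deg_v_def chp rl)
qed

lemma tree_weight_remove_leaf:
  fixes x :: "nat \<Rightarrow> 'a::comm_semiring_1"
  assumes chp: "ch p = as @ l # bs"
  shows "tree_weight x t S ch = tree_weight x t (S - {l}) (remove_leaf l ch) * (if bs = [] then x p else t)"
proof -
  let ?w = "\<lambda>ch v. t ^ eld_v ch v * x v ^ young_v ch v"
  let ?ch' = "remove_leaf l ch"
  have l_child: "l \<in> set (ch p)" using chp by simp
  then have p: "p \<in> S - {l}" using plane_tree_on_childD[OF tree] leaf by fastforce
  have "?w ch l = 1" using leaf by (simp add: eld_v_eq_elder_count young_v_def deg_v_def)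
  moreover have "?w ch p = ?w ?ch' p * (if bs = [] then x p else t)"
    using eld_young_remove_leaf_parent[OF chp] by (simp add: power_add algebra_simps)
  moreover have "?w ch v = ?w ?ch' v" if "v \<noteq> p" for v
    using eld_young_remove_leaf_nonparent parent_unique[OF tree _ l_child] that by metis
  ultimately have "tree_weight x t S ch
      = ?w ?ch' p * (\<Prod>v\<in>S - {l} - {p}. ?w ?ch' v) * (if bs = [] then x p else t)"
    unfolding tree_weight_def using finite leaf_mem p
    by (simp add: prod.remove[of S l] prod.remove[of "S - {l}" p] ac_simps)
  also have "\<dots> = tree_weight x t (S - {l}) ?ch' * (if bs = [] then x p else t)"
    unfolding tree_weight_def using finite p by (simp add: prod.remove[of "S - {l}" p])
  finally show ?thesis .
qed

end

definition degree_sequence :: "nat set \<Rightarrow> nat \<Rightarrow> (nat \<Rightarrow> nat) \<Rightarrow> bool" where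
  "degree_sequence S m d \<longleftrightarrow> (\<Sum>v\<in>S. d v) = m \<and> (\<forall>v. v \<notin> S \<longrightarrow> d v = 0)"

definition plane_trees_deg ::
    "nat set \<Rightarrow> (nat \<Rightarrow> nat) \<Rightarrow> (nat \<times> (nat \<Rightarrow> nat list)) set" where
  "plane_trees_deg S d = {(r, ch). plane_tree_on S r ch \<and> (\<forall>v. length (ch v) = d v)}"

definition words_with_counts :: "nat set \<Rightarrow> nat \<Rightarrow> (nat \<Rightarrow> nat) \<Rightarrow> nat list set" where
  "words_with_counts S m d = {s. set s \<subseteq> S \<and> length s = m \<and> count_list s = d}"

definition rising :: "'a::comm_semiring_1 \<Rightarrow> 'a \<Rightarrow> nat \<Rightarrow> 'a" where
  "rising t y k = (\<Prod>j<k. y + of_nat j * t)"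

definition rising_weight ::
    "(nat \<Rightarrow> 'a::comm_semiring_1) \<Rightarrow> 'a \<Rightarrow> nat set \<Rightarrow> (nat \<Rightarrow> nat) \<Rightarrow> 'a" where
  "rising_weight x t S d = (\<Prod>v\<in>S. rising t (x v) (d v))"

lemma finite_plane_trees_on:
  assumes "finite S"
  shows "finite {(r, ch). plane_tree_on S r ch}"
proof -
  let ?L = "{xs. set xs \<subseteq> S \<and> length xs \<le> card S}"
  let ?F = "{ch. \<forall>v. (v \<in> S \<longrightarrow> ch v \<in> ?L) \<and> (v \<notin> S \<longrightarrow> ch v = [])}"
  have "finite ?F"
    by (rule finite_set_of_finite_funs) (use assms finite_lists_length_le in auto)
  moreover have "{(r, ch). plane_tree_on S r ch} \<subseteq> S \<times> ?F"
  proof clarify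
    fix r ch assume tree: "plane_tree_on S r ch"
    have "length (ch v) \<le> card S" for v
    proof -
      have "length (ch v) = card (set (ch v))"
        using tree unfolding plane_tree_on_def by (simp add: distinct_card)
      also have "\<dots> \<le> card S" using tree assms unfolding plane_tree_on_def by (simp add: card_mono)
      finally show ?thesis .
    qed
    then show "r \<in> S \<and> ch \<in> ?F" using tree unfolding plane_tree_on_def by auto
  qed
  ultimately show ?thesis using assms by (meson finite_SigmaI finite_subset)
qed

lemma finite_plane_trees_deg: "finite S \<Longrightarrow> finite (plane_trees_deg S d)"
  by (rule finite_subset[OF _ finite_plane_trees_on]) (auto simp: plane_trees_deg_def)

lemma sum_length_children:
  assumes tree: "plane_tree_on S r ch" and "finite S"
  shows "(\<Sum>v\<in>S. length (ch v)) = card S - 1"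
proof -
  have "(\<Sum>v\<in>S. length (ch v)) = (\<Sum>v\<in>S. card (set (ch v)))"
    using tree unfolding plane_tree_on_def by (simp add: distinct_card)
  also have "\<dots> = card (\<Union>v\<in>S. set (ch v))"
    using assms parent_unique[OF tree] by (intro card_UN_disjoint[symmetric]) auto
  also have "(\<Union>v\<in>S. set (ch v)) = S - {r}"
  proof
    show "(\<Union>v\<in>S. set (ch v)) \<subseteq> S - {r}" using plane_tree_on_childD[OF tree] by blast
    show "S - {r} \<subseteq> (\<Union>v\<in>S. set (ch v))"
    proof
      fix c assume "c \<in> S - {r}"
      then obtain v where "c \<in> set (ch v)" using tree unfolding plane_tree_on_def by metis
      then show "c \<in> (\<Union>v\<in>S. set (ch v))" using plane_tree_on_childD(2)[OF tree] by blast
    qed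
  qed
  also have "card (S - {r}) = card S - 1" using tree assms unfolding plane_tree_on_def by simp
  finally show ?thesis .
qed

lemma degree_sequence_plane_trees_deg:
  assumes "(r, ch) \<in> plane_trees_deg S d" "finite S"
  shows "degree_sequence S (card S - 1) d"
proof -
  have tree: "plane_tree_on S r ch" and len: "\<And>v. length (ch v) = d v"
    using assms(1) by (auto simp: plane_trees_deg_def)
  have "(\<Sum>v\<in>S. d v) = card S - 1" using sum_length_children[OF tree assms(2)] len by simp
  moreover have "d v = 0" if "v \<notin> S" for v
    using tree that len[of v] unfolding plane_tree_on_def by auto
  ultimately show ?thesis by (simp add: degree_sequence_def)
qed

lemma degree_sequence_words_with_counts:
  assumes "s \<in> words_with_counts S m d" "finite S"
  shows "degree_sequence S m d"
proof -
  have s: "set s \<subseteq> S" "length s = m" "count_list s = d"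
    using assms(1) by (auto simp: words_with_counts_def)
  then have "count_list s v = 0" if "v \<notin> S" for v using that by (meson count_notin subsetD)
  then show ?thesis using s assms(2) by (auto simp: degree_sequence_def sum_count_set)
qed

lemma card_words_with_counts_Suc:
  assumes "finite S"
  shows "card (words_with_counts S (Suc m) d)
    = (\<Sum>p\<in>{p\<in>S. 1 \<le> d p}. card (words_with_counts S m (d(p := d p - 1))))"
proof -
  let ?P = "{p\<in>S. 1 \<le> d p}" and ?W = "\<lambda>p. words_with_counts S m (d(p := d p - 1))"
  have "words_with_counts S (Suc m) d = (\<Union>p\<in>?P. (Cons p) ` ?W p)"
  proof (intro set_eqI iffI)
    fix s assume s: "s \<in> words_with_counts S (Suc m) d"
    then obtain p s' where ps: "s = p # s'" by (cases s) (auto simp: words_with_counts_def)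
    have cnt: "count_list (p # s') v = d v" for v
      using s ps by (simp add: words_with_counts_def)
    then have "1 \<le> d p" using cnt[of p] by simp
    moreover have "count_list s' = d(p := d p - 1)"
    proof
      fix v show "count_list s' v = (d(p := d p - 1)) v" using cnt[of v] by (cases "v = p") auto
    qed
    ultimately show "s \<in> (\<Union>p\<in>?P. (Cons p) ` ?W p)"
      using s ps by (auto simp: words_with_counts_def)
  next
    fix s assume "s \<in> (\<Union>p\<in>?P. (Cons p) ` ?W p)"
    then obtain p s' where p: "p \<in> S" "1 \<le> d p" "s = p # s'" and s': "s' \<in> ?W p" by blast
    then have "count_list s v = d v" for v by (cases "v = p") (auto simp: words_with_counts_def)
    then show "s \<in> words_with_counts S (Suc m) d" using p s' by (auto simp: words_with_counts_def)
  qed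
  moreover have "finite (?W p)" for p
    by (rule finite_subset[OF _ finite_lists_length_eq[OF assms, of m]])
      (auto simp: words_with_counts_def)
  then have "card (\<Union>p\<in>?P. (Cons p) ` ?W p) = (\<Sum>p\<in>?P. card ((Cons p) ` ?W p))"
    using assms by (intro card_UN_disjoint) auto
  ultimately show ?thesis by (simp add: card_image)
qed

lemma words_with_counts_remove:
  "d l = 0 \<Longrightarrow> words_with_counts S m d = words_with_counts (S - {l}) m d"
  unfolding words_with_counts_def by (auto simp: count_list_0_iff)

lemma rising_Suc: "rising t y (Suc k) = rising t y k * (y + of_nat k * t)"
  by (simp add: rising_def)

lemma rising_weight_inc:
  assumes "finite S" "p \<in> S"
  shows "rising_weight x t S (d(p := d p + 1)) = rising_weight x t S d * (x p + of_nat (d p) * t)"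
proof -
  have "rising_weight x t S (d(p := d p + 1)) = rising t (x p) (Suc (d p)) * (\<Prod>v\<in>S - {p}. rising t (x v) (d v))"
    unfolding rising_weight_def using assms by (simp add: prod.remove)
  also have "\<dots> = rising_weight x t S d * (x p + of_nat (d p) * t)"
    unfolding rising_weight_def rising_Suc using assms by (simp add: prod.remove algebra_simps)
  finally show ?thesis .
qed

lemma rising_weight_remove:
  "finite S \<Longrightarrow> d l = 0 \<Longrightarrow> rising_weight x t S d = rising_weight x t (S - {l}) d"
  unfolding rising_weight_def by (rule prod.mono_neutral_right) (auto simp: rising_def)

lemma rising_weight_dec:
  assumes "finite S" "p \<in> S - {l}" "1 \<le> d p" "d l = 0"
  shows "rising_weight x t S d
    = rising_weight x t (S - {l}) (d(p := d p - 1)) * (x p + of_nat (d p - 1) * t)"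
proof -
  have "(d(p := d p - 1))(p := d p - 1 + 1) = d" using assms(3) by auto
  then have "rising_weight x t S d = rising_weight x t S (d(p := d p - 1)) * (x p + of_nat (d p - 1) * t)"
    using rising_weight_inc[OF assms(1), of p x t "d(p := d p - 1)"] assms(2) by simp
  also have "rising_weight x t S (d(p := d p - 1)) = rising_weight x t (S - {l}) (d(p := d p - 1))"
    using assms by (intro rising_weight_remove) auto
  finally show ?thesis .
qed

lemma sum_words_rising_weight:
  fixes x :: "nat \<Rightarrow> 'a::comm_semiring_1"
  assumes "finite S"
  shows "(\<Sum>s\<in>{s. set s \<subseteq> S \<and> length s = m}. rising_weight x t S (count_list s))
    = rising t (\<Sum>v\<in>S. x v) m"
proof (induction m)
  case 0
  have "{s. set s \<subseteq> S \<and> length s = 0} = {[]}" by auto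
  then show ?case by (simp add: rising_weight_def rising_def)
next
  case (Suc m)
  let ?W = "{s. set s \<subseteq> S \<and> length s = m}"
  have count_Cons: "count_list (p # s) = (count_list s)(p := count_list s p + 1)" for p s
    by (auto simp: fun_eq_iff)
  have "(\<Sum>s\<in>{s. set s \<subseteq> S \<and> length s = Suc m}. rising_weight x t S (count_list s))
      = (\<Sum>s\<in>?W. \<Sum>p\<in>S. rising_weight x t S (count_list (p # s)))"
    unfolding lists_length_Suc_eq
    by (subst sum.reindex) (auto simp: inj_on_def sum.cartesian_product split_def)
  also have "\<dots> = (\<Sum>s\<in>?W. rising_weight x t S (count_list s) * ((\<Sum>v\<in>S. x v) + of_nat m * t))"
  proof (rule sum.cong[OF refl])
    fix s assume "s \<in> ?W"
    then have m: "(\<Sum>p\<in>S. count_list s p) = m" using assms by (simp add: sum_count_set)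
    have "(\<Sum>p\<in>S. rising_weight x t S (count_list (p # s)))
        = (\<Sum>p\<in>S. rising_weight x t S (count_list s) * (x p + of_nat (count_list s p) * t))"
      by (rule sum.cong[OF refl]) (simp only: count_Cons rising_weight_inc[OF assms])
    also have "\<dots> = rising_weight x t S (count_list s) * ((\<Sum>v\<in>S. x v) + of_nat m * t)"
      by (simp add: m[symmetric] sum_distrib_left sum.distrib sum_distrib_right algebra_simps)
    finally show "(\<Sum>p\<in>S. rising_weight x t S (count_list (p # s)))
        = rising_weight x t S (count_list s) * ((\<Sum>v\<in>S. x v) + of_nat m * t)" .
  qed
  also have "\<dots> = rising t (\<Sum>v\<in>S. x v) (Suc m)"
    by (simp add: Suc rising_Suc flip: sum_distrib_right)
  finally show ?case .
qed

lemma sum_lessThan_if_last: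
  assumes "1 \<le> k"
  shows "(\<Sum>i<k. if i = k - 1 then a else b) = a + of_nat (k - 1) * (b :: 'a::comm_semiring_1)"
proof -
  obtain m where k: "k = Suc m" using assms by (cases k) auto
  have "(\<Sum>i<m. if i = m then a else b) = (\<Sum>i<m. b)" by (rule sum.cong) auto
  then show ?thesis using k by (simp add: algebra_simps)
qed

context
  fixes S :: "nat set" and d :: "nat \<Rightarrow> nat" and l :: nat
  assumes finite: "finite S" and leaf_mem: "l \<in> S" and leaf_deg: "d l = 0"
begin

text \<open>A slot (p, i, r, c) is a tree (r, c) on S - {l} whose outdegrees are those of d, except
  that p has one child fewer, together with a position i among the children of p at which l is
  to be inserted.\<close>

definition leaf_slots :: "(nat \<times> nat \<times> nat \<times> (nat \<Rightarrow> nat list)) set" where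
  "leaf_slots = (SIGMA p:{p\<in>S - {l}. 1 \<le> d p}. SIGMA i:{..<d p}. plane_trees_deg (S - {l}) (d(p := d p - 1)))"

lemma leaf_slotsD:
  assumes "(p, i, r, c) \<in> leaf_slots"
  shows "p \<in> S - {l}" "i < d p" "plane_tree_on (S - {l}) r c" "length (c p) = d p - 1"
    "\<And>v. v \<noteq> p \<Longrightarrow> length (c v) = d v"
  using assms unfolding leaf_slots_def plane_trees_deg_def by (auto split: if_splits)

lemma insert_child_mem_plane_trees_deg:
  assumes "(p, i, r, c) \<in> leaf_slots"
  shows "(r, insert_child p i l c) \<in> plane_trees_deg S d"
proof -
  note slot = leaf_slotsD[OF assms]
  have "length (insert_child p i l c v) = d v" for v
    using slot by (cases "v = p") (auto simp: length_insert_child)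
  then show ?thesis
    using plane_tree_on_insert_child[OF slot(3) leaf_mem slot(1)] by (simp add: plane_trees_deg_def)
qed

lemma plane_trees_deg_insert_child_cases:
  assumes "(r, ch) \<in> plane_trees_deg S d" "2 \<le> card S"
  obtains p i c where "(p, i, r, c) \<in> leaf_slots" "ch = insert_child p i l c"
proof -
  have tree: "plane_tree_on S r ch" and len: "\<And>v. length (ch v) = d v"
    using assms(1) by (auto simp: plane_trees_deg_def)
  have leaf: "ch l = []" using len[of l] leaf_deg by simp
  obtain c where "c \<in> set (ch r)"
    using plane_tree_on_root_has_child[OF tree finite assms(2)] by (cases "ch r") auto
  then have "l \<noteq> r" using leaf by auto
  then obtain p where l_child: "l \<in> set (ch p)"
    using tree leaf_mem unfolding plane_tree_on_def by blast
  then obtain as bs where chp: "ch p = as @ l # bs" by (meson split_list)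
  have distinct: "distinct (ch p)" using tree by (simp add: plane_tree_on_def)
  have p: "p \<in> S - {l}" using plane_tree_on_childD[OF tree l_child] leaf l_child by auto
  have other: "l \<notin> set (ch v)" if "v \<noteq> p" for v using parent_unique[OF tree _ l_child] that by blast
  let ?c = "remove_leaf l ch"
  have "length (?c v) = (d(p := d p - 1)) v" for v
  proof (cases "v = p")
    case True
    then show ?thesis using remove_leaf_parent[of ch p, OF chp distinct] len[of p] chp by simp
  next
    case False
    then show ?thesis using remove_leaf_eq_self[of l ch v] other len by simp
  qed
  then have "(p, length as, r, ?c) \<in> leaf_slots"
    using plane_tree_on_remove_leaf[OF tree leaf \<open>l \<noteq> r\<close>] p len[of p] chp
    by (auto simp: leaf_slots_def plane_trees_deg_def)
  moreover have "ch = insert_child p (length as) l ?c"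
    using insert_child_remove_leaf[of ch p, OF chp distinct other] by simp
  ultimately show ?thesis by (rule that)
qed

lemma inj_on_insert_child_leaf_slots:
  "inj_on (\<lambda>(p, i, r, c). (r, insert_child p i l c)) leaf_slots"
proof (rule inj_onI)
  fix y z assume y: "y \<in> leaf_slots" and z: "z \<in> leaf_slots"
    and yz: "(case y of (p, i, r, c) \<Rightarrow> (r, insert_child p i l c))
      = (case z of (p, i, r, c) \<Rightarrow> (r, insert_child p i l c))"
  obtain p1 i1 r1 c1 p2 i2 r2 c2 where y_eq: "y = (p1, i1, r1, c1)" and z_eq: "z = (p2, i2, r2, c2)"
    by (metis prod_cases4)
  have r: "r1 = r2" and eq: "insert_child p1 i1 l c1 = insert_child p2 i2 l c2"
    using yz by (simp_all add: y_eq z_eq)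
  have "l \<notin> set (c1 v)" "l \<notin> set (c2 v)" for v
    using leaf_slotsD(3)[of p1 i1 r1 c1] leaf_slotsD(3)[of p2 i2 r2 c2] y z
    unfolding y_eq z_eq plane_tree_on_def by auto
  moreover have "i1 \<le> length (c1 p1)" "i2 \<le> length (c2 p2)"
    using leaf_slotsD(2,4)[of p1 i1 r1 c1] leaf_slotsD(2,4)[of p2 i2 r2 c2] y z
    unfolding y_eq z_eq by auto
  ultimately show "y = z"
    using insert_child_inj[OF _ _ _ _ eq] r y_eq z_eq by blast
qed

lemma bij_betw_insert_child_leaf_slots:
  assumes "2 \<le> card S"
  shows "bij_betw (\<lambda>(p, i, r, c). (r, insert_child p i l c)) leaf_slots (plane_trees_deg S d)"
  unfolding bij_betw_def
proof (intro conjI inj_on_insert_child_leaf_slots subset_antisym)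
  show "(\<lambda>(p, i, r, c). (r, insert_child p i l c)) ` leaf_slots \<subseteq> plane_trees_deg S d"
    using insert_child_mem_plane_trees_deg by auto
  show "plane_trees_deg S d \<subseteq> (\<lambda>(p, i, r, c). (r, insert_child p i l c)) ` leaf_slots"
  proof clarify
    fix r ch assume "(r, ch) \<in> plane_trees_deg S d"
    then obtain p i c where "(p, i, r, c) \<in> leaf_slots" "ch = insert_child p i l c"
      using plane_trees_deg_insert_child_cases assms by metis
    then show "(r, ch) \<in> (\<lambda>(p, i, r, c). (r, insert_child p i l c)) ` leaf_slots"
      by (auto intro!: image_eqI[where x = "(p, i, r, c)"])
  qed
qed

lemma tree_weight_insert_child:
  assumes slot: "(p, i, r, c) \<in> leaf_slots" and max: "\<And>v. v \<in> S \<Longrightarrow> d v = 0 \<Longrightarrow> v \<le> l"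
  shows "tree_weight x t S (insert_child p i l c)
    = tree_weight x t (S - {l}) c * (if i = d p - 1 then x p else t)"
proof -
  let ?ch = "insert_child p i l c"
  note slot' = leaf_slotsD[OF slot]
  have mem: "(r, ?ch) \<in> plane_trees_deg S d" by (rule insert_child_mem_plane_trees_deg[OF slot])
  then have len: "length (?ch v) = d v" for v by (simp add: plane_trees_deg_def)
  have "max_leaf S r ?ch l"
  proof
    show "plane_tree_on S r ?ch" using mem by (simp add: plane_trees_deg_def)
    show "finite S" "l \<in> S" by (fact finite leaf_mem)+
    show "l \<noteq> r" using slot'(3) by (auto simp: plane_tree_on_def)
    show "?ch l = []" using len[of l] leaf_deg by simp
    show "v \<le> l" if "v \<in> S" "?ch v = []" for v using max that len[of v] by simp
  qed
  moreover have "?ch p = take i (c p) @ l # drop i (c p)" by (simp add: insert_child_def)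
  ultimately have "tree_weight x t S ?ch
      = tree_weight x t (S - {l}) (remove_leaf l ?ch) * (if drop i (c p) = [] then x p else t)"
    by (rule max_leaf.tree_weight_remove_leaf)
  moreover have "remove_leaf l ?ch = c"
    using slot'(3) by (intro remove_leaf_insert_child) (auto simp: plane_tree_on_def)
  moreover have "drop i (c p) = [] \<longleftrightarrow> i = d p - 1" using slot'(2,4) by auto
  ultimately show ?thesis by simp
qed

lemma sum_tree_weight_remove_max_leaf:
  fixes x :: "nat \<Rightarrow> 'a::comm_semiring_1"
  assumes "2 \<le> card S" and max: "\<And>v. v \<in> S \<Longrightarrow> d v = 0 \<Longrightarrow> v \<le> l"
  shows "(\<Sum>(r, ch)\<in>plane_trees_deg S d. tree_weight x t S ch)
    = (\<Sum>p\<in>{p\<in>S - {l}. 1 \<le> d p}. (x p + of_nat (d p - 1) * t) *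
        (\<Sum>(r, c)\<in>plane_trees_deg (S - {l}) (d(p := d p - 1)). tree_weight x t (S - {l}) c))"
proof -
  let ?f = "\<lambda>p i. if i = d p - 1 then x p else t"
  have "(\<Sum>(r, ch)\<in>plane_trees_deg S d. tree_weight x t S ch)
      = (\<Sum>(p, i, r, c)\<in>leaf_slots. tree_weight x t S (insert_child p i l c))"
    using sum.reindex_bij_betw[OF bij_betw_insert_child_leaf_slots[OF assms(1)],
        of "\<lambda>(r, ch). tree_weight x t S ch"]
    by (simp add: split_def)
  also have "\<dots> = (\<Sum>(p, i, r, c)\<in>leaf_slots. tree_weight x t (S - {l}) c * ?f p i)"
    by (rule sum.cong[OF refl]) (clarsimp simp: tree_weight_insert_child[OF _ max])
  also have "\<dots> = (\<Sum>p\<in>{p\<in>S - {l}. 1 \<le> d p}. \<Sum>i<d p.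
      \<Sum>(r, c)\<in>plane_trees_deg (S - {l}) (d(p := d p - 1)). tree_weight x t (S - {l}) c * ?f p i)"
    unfolding leaf_slots_def using finite
    by (simp add: sum.Sigma finite_plane_trees_deg split_def)
  also have "\<dots> = (\<Sum>p\<in>{p\<in>S - {l}. 1 \<le> d p}. (\<Sum>i<d p. ?f p i) *
      (\<Sum>(r, c)\<in>plane_trees_deg (S - {l}) (d(p := d p - 1)). tree_weight x t (S - {l}) c))"
    by (simp add: sum_product split_def mult.commute)
  also have "\<dots> = (\<Sum>p\<in>{p\<in>S - {l}. 1 \<le> d p}. (x p + of_nat (d p - 1) * t) *
      (\<Sum>(r, c)\<in>plane_trees_deg (S - {l}) (d(p := d p - 1)). tree_weight x t (S - {l}) c))"
    using sum_lessThan_if_last[of "d _" "x _" t] by (intro sum.cong) auto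
  finally show ?thesis .
qed

end

lemma degree_sequence_obtains_max_leaf:
  assumes "degree_sequence S (card S - 1) d" "finite S" "S \<noteq> {}"
  obtains l where "l \<in> S" "d l = 0" "\<And>v. v \<in> S \<Longrightarrow> d v = 0 \<Longrightarrow> v \<le> l"
proof -
  have "{v\<in>S. d v = 0} \<noteq> {}"
  proof
    assume "{v\<in>S. d v = 0} = {}"
    then have "(\<Sum>v\<in>S. 1) \<le> (\<Sum>v\<in>S. d v)" by (intro sum_mono) auto
    moreover have "0 < card S" using assms(2,3) by (simp add: card_gt_0_iff)
    ultimately show False using assms(1) by (simp add: degree_sequence_def)
  qed
  then show ?thesis
    using that[of "Max {v\<in>S. d v = 0}"] Max_in[of "{v\<in>S. d v = 0}"] assms(2) by auto
qed

lemma sum_tree_weight_plane_trees_deg_singleton: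
  assumes "degree_sequence {a} 0 d"
  shows "(\<Sum>(r, ch)\<in>plane_trees_deg {a} d. tree_weight x t {a} ch)
    = of_nat (card (words_with_counts {a} 0 d)) * rising_weight x t {a} d"
proof -
  have "d v = 0" for v using assms by (cases "v = a") (auto simp: degree_sequence_def)
  then have d: "d = (\<lambda>_. 0)" by blast
  have "plane_trees_deg {a} d = {(a, \<lambda>_. [])}"
    unfolding d plane_trees_deg_def plane_tree_on_def by (auto simp: fun_eq_iff)
  moreover have "words_with_counts {a} 0 d = {[]}"
    unfolding d words_with_counts_def by (auto simp: fun_eq_iff)
  ultimately show ?thesis
    by (simp add: d tree_weight_def rising_weight_def rising_def eld_v_eq_elder_count
        young_v_def deg_v_def)
qed

lemma sum_tree_weight_plane_trees_deg:
  fixes x :: "nat \<Rightarrow> 'a::comm_semiring_1"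
  assumes "finite S" "S \<noteq> {}"
  shows "(\<Sum>(r, ch)\<in>plane_trees_deg S d. tree_weight x t S ch)
    = of_nat (card (words_with_counts S (card S - 1) d)) * rising_weight x t S d"
  using assms
proof (induction "card S" arbitrary: S d rule: less_induct)
  case less
  show ?case
  proof (cases "degree_sequence S (card S - 1) d")
    case False
    then have "plane_trees_deg S d = {}" "words_with_counts S (card S - 1) d = {}"
      using degree_sequence_plane_trees_deg[of _ _ S d] degree_sequence_words_with_counts[of _ S]
        less.prems(1) by auto
    then show ?thesis by simp
  next
    case True
    consider (single) a where "S = {a}" | (several) "2 \<le> card S"
    proof (cases "card S = 1")
      case False
      moreover have "card S \<noteq> 0" using less.prems by simp
      ultimately have "2 \<le> card S" by linarith
      then show ?thesis by (rule that(2))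
    qed (metis card_1_singletonE that(1))
    then show ?thesis
    proof cases
      case single
      then show ?thesis using True sum_tree_weight_plane_trees_deg_singleton by simp
    next
      case several
      obtain l where l: "l \<in> S" "d l = 0" and max: "\<And>v. v \<in> S \<Longrightarrow> d v = 0 \<Longrightarrow> v \<le> l"
        using degree_sequence_obtains_max_leaf[OF True less.prems] by blast
      let ?P = "{p\<in>S - {l}. 1 \<le> d p}" and ?d = "\<lambda>p. d(p := d p - 1)"
      have "card (S - {l}) = card S - 1" using l(1) less.prems(1) by simp
      then have card': "card (S - {l}) < card S" "card (S - {l}) - 1 = card S - 2"
        and "0 < card (S - {l})" using several by auto
      then have nonempty: "S - {l} \<noteq> {}" by force
      have IH: "(\<Sum>(r, c)\<in>plane_trees_deg (S - {l}) d'. tree_weight x t (S - {l}) c)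
          = of_nat (card (words_with_counts (S - {l}) (card S - 2) d')) * rising_weight x t (S - {l}) d'"
        for d'
        using less.hyps[OF card'(1) _ nonempty] less.prems(1) card'(2) by simp
      have "(\<Sum>(r, ch)\<in>plane_trees_deg S d. tree_weight x t S ch)
          = (\<Sum>p\<in>?P. (x p + of_nat (d p - 1) * t) *
              (\<Sum>(r, c)\<in>plane_trees_deg (S - {l}) (?d p). tree_weight x t (S - {l}) c))"
        by (rule sum_tree_weight_remove_max_leaf[of S l d, OF less.prems(1) l several max])
      also have "\<dots> = (\<Sum>p\<in>?P. of_nat (card (words_with_counts S (card S - 2) (?d p)))
          * rising_weight x t S d)"
      proof (rule sum.cong[OF refl])
        fix p assume p: "p \<in> ?P"
        then have "words_with_counts S (card S - 2) (?d p) = words_with_counts (S - {l}) (card S - 2) (?d p)"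
          using l(2) by (intro words_with_counts_remove) auto
        moreover have "rising_weight x t S d
            = rising_weight x t (S - {l}) (?d p) * (x p + of_nat (d p - 1) * t)"
          using p l(2) less.prems(1) by (intro rising_weight_dec) auto
        ultimately show "(x p + of_nat (d p - 1) * t) *
              (\<Sum>(r, c)\<in>plane_trees_deg (S - {l}) (?d p). tree_weight x t (S - {l}) c)
            = of_nat (card (words_with_counts S (card S - 2) (?d p))) * rising_weight x t S d"
          by (simp add: IH ac_simps)
      qed
      also have "\<dots> = of_nat (\<Sum>p\<in>?P. card (words_with_counts S (card S - 2) (?d p)))
          * rising_weight x t S d"
        by (simp add: sum_distrib_right)
      also have "(\<Sum>p\<in>?P. card (words_with_counts S (card S - 2) (?d p)))
          = card (words_with_counts S (card S - 1) d)"
      proof -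
        have "card S - 1 = Suc (card S - 2)" using several by simp
        moreover have "{p\<in>S. 1 \<le> d p} = ?P" using l(2) by auto
        ultimately show ?thesis using card_words_with_counts_Suc[OF less.prems(1), of "card S - 2" d]
          by simp
      qed
      finally show ?thesis .
    qed
  qed
qed

lemma sum_tree_weight_plane_trees_on:
  fixes x :: "nat \<Rightarrow> 'a::comm_semiring_1"
  assumes "finite S" "S \<noteq> {}"
  shows "(\<Sum>(r, ch)\<in>{(r, ch). plane_tree_on S r ch}. tree_weight x t S ch)
    = rising t (\<Sum>v\<in>S. x v) (card S - 1)"
proof -
  let ?T = "{(r, ch). plane_tree_on S r ch}" and ?W = "{s. set s \<subseteq> S \<and> length s = card S - 1}"
  let ?deg = "\<lambda>(r, ch) v. length (ch v)"
  let ?D = "?deg ` ?T \<union> count_list ` ?W"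
  have fin: "finite ?T" "finite ?W" "finite ?D"
    using finite_plane_trees_on finite_lists_length_eq assms(1) by auto
  have "(\<Sum>(r, ch)\<in>?T. tree_weight x t S ch)
      = (\<Sum>d\<in>?D. \<Sum>(r, ch)\<in>{T \<in> ?T. ?deg T = d}. tree_weight x t S ch)"
    using fin by (intro sum.group[symmetric]) auto
  also have "\<dots> = (\<Sum>d\<in>?D. of_nat (card (words_with_counts S (card S - 1) d)) * rising_weight x t S d)"
  proof (rule sum.cong[OF refl])
    fix d
    have "{T \<in> ?T. ?deg T = d} = plane_trees_deg S d" by (auto simp: plane_trees_deg_def fun_eq_iff)
    then show "(\<Sum>(r, ch)\<in>{T \<in> ?T. ?deg T = d}. tree_weight x t S ch)
        = of_nat (card (words_with_counts S (card S - 1) d)) * rising_weight x t S d"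
      using sum_tree_weight_plane_trees_deg[OF assms] by simp
  qed
  also have "\<dots> = (\<Sum>d\<in>?D. \<Sum>s\<in>{s \<in> ?W. count_list s = d}. rising_weight x t S (count_list s))"
    by (rule sum.cong[OF refl]) (simp add: words_with_counts_def conj_assoc)
  also have "\<dots> = (\<Sum>s\<in>?W. rising_weight x t S (count_list s))"
    using fin by (intro sum.group) auto
  also have "\<dots> = rising t (\<Sum>v\<in>S. x v) (card S - 1)"
    by (rule sum_words_rising_weight[OF assms(1)])
  finally show ?thesis .
qed

theorem theorem4p3:
  fixes n :: nat and x :: "nat \<Rightarrow> 'a::comm_ring_1" and t :: 'a
  assumes "n \<ge> 1"
  shows "(\<Sum>(r, ch)\<in>plane_trees n. t ^ eld n ch * (\<Prod>i=1..n. x i ^ young_v ch i))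
         = (\<Prod>k\<in>{0..<n-1}. (\<Sum>i=1..n. x i) + of_nat k * t)"
proof -
  have trees: "plane_trees n = {(r, ch). plane_tree_on {1..n} r ch}"
    by (simp add: plane_trees_def is_plane_tree_iff_plane_tree_on)
  have weight: "t ^ eld n ch * (\<Prod>i=1..n. x i ^ young_v ch i) = tree_weight x t {1..n} ch" for ch
    by (simp add: tree_weight_def eld_def power_sum prod.distrib)
  have "(\<Sum>(r, ch)\<in>plane_trees n. t ^ eld n ch * (\<Prod>i=1..n. x i ^ young_v ch i))
      = rising t (\<Sum>i=1..n. x i) (n - 1)"
    unfolding trees weight using sum_tree_weight_plane_trees_on[of "{1..n}" x t] assms by simp
  then show ?thesis by (simp add: rising_def atLeast0LessThan)
qed

end
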